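(* Let $G$ be a finite simple graph that contains a subdivision of $K_4^-$ as a subgraph. Then $S(G)$ contains a subdivision of $K_{3,3}$ as a subgraph.
   Context: $K_4^-$ denotes the complete graph $K_4$ with one edge removed (the diamond graph). A subdivision of a graph $F$ is a graph obtained from $F$ by replacing edges with internally vertex-disjoint paths. For a graph $G$, the great shadow $S(G)$ is the graph obtained from $G$ by adding, for each vertex $v$ of $G$, a new vertex $v'$ (the shadow vertex of $v$) and making $v'$ adjacent to $v$ and to every neighbor of $v$ in $G$; no other edges are added. *)

theory Defs
  imports Main
begin

definition simple_graph :: "'a set \<Rightarrow> ('a \<Rightarrow> 'a \<Rightarrow> bool) \<Rightarrow> bool" where
  "simple_graph V E \<longleftrightarrow> finite V \<and>
     (\<forall>u v. E u v \<longrightarrow> u \<in> V \<and> v \<in> V \<and> u \<noteq> v \<and> E v u)"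

definition path_in :: "'a set \<Rightarrow> ('a \<Rightarrow> 'a \<Rightarrow> bool) \<Rightarrow> 'a list \<Rightarrow> bool" where
  "path_in V E p \<longleftrightarrow> p \<noteq> [] \<and> distinct p \<and> set p \<subseteq> V \<and>
     (\<forall>i. Suc i < length p \<longrightarrow> E (p ! i) (p ! Suc i))"

definition has_subdivision ::
  "'b set \<Rightarrow> ('b \<Rightarrow> 'b \<Rightarrow> bool) \<Rightarrow> 'a set \<Rightarrow> ('a \<Rightarrow> 'a \<Rightarrow> bool) \<Rightarrow> bool" where
  "has_subdivision VH EH VG EG \<longleftrightarrow>
     (\<exists>f P. inj_on f VH \<and> f ` VH \<subseteq> VG \<and>
        (\<forall>u v. EH u v \<longrightarrow> path_in VG EG (P u v) \<and> hd (P u v) = f u \<and> last (P u v) = f v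
             \<and> P v u = rev (P u v) \<and> set (P u v) \<inter> f ` VH = {f u, f v}) \<and>
        (\<forall>u v x y. EH u v \<and> EH x y \<and> {u, v} \<noteq> {x, y} \<longrightarrow>
             set (P u v) \<inter> set (P x y) \<subseteq> f ` VH))"

definition K4m_V :: "nat set" where "K4m_V = {0..3}"
definition K4m_E :: "nat \<Rightarrow> nat \<Rightarrow> bool" where
  "K4m_E u v \<longleftrightarrow> u \<in> K4m_V \<and> v \<in> K4m_V \<and> u \<noteq> v \<and> {u, v} \<noteq> {2, 3}"

definition K33_V :: "nat set" where "K33_V = {0..5}"
definition K33_E :: "nat \<Rightarrow> nat \<Rightarrow> bool" where
  "K33_E u v \<longleftrightarrow> (u < 3 \<and> 3 \<le> v \<and> v < 6) \<or> (v < 3 \<and> 3 \<le> u \<and> u < 6)"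

text \<open>Great shadow: (v,False) is the original vertex v, (v,True) is its shadow v'.
  v' is adjacent to v and to all neighbours of v; shadows are pairwise nonadjacent.\<close>
definition shadow_V :: "'a set \<Rightarrow> ('a \<times> bool) set" where
  "shadow_V V = V \<times> UNIV"
definition shadow_E :: "'a set \<Rightarrow> ('a \<Rightarrow> 'a \<Rightarrow> bool) \<Rightarrow> 'a \<times> bool \<Rightarrow> 'a \<times> bool \<Rightarrow> bool" where
  "shadow_E V E x y \<longleftrightarrow>
     (\<not> snd x \<and> \<not> snd y \<and> E (fst x) (fst y)) \<or>
     (snd x \<and> \<not> snd y \<and> (E (fst x) (fst y) \<or> (fst x = fst y \<and> fst x \<in> V))) \<or>
     (\<not> snd x \<and> snd y \<and> (E (fst y) (fst x) \<or> (fst x = fst y \<and> fst x \<in> V)))"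

end

theory Submission
  imports Defs
begin

text \<open>Suppressing one of the two degree-two branch vertices, d, of a subdivided diamond
  leaves vertices a, b, c joined by internally disjoint paths A from a to c, B from c to b, and
  R, D from a to b, where D has an interior vertex. In S(G) the six vertices a, b, c, a', b', c'
  become the branch vertices of K33, every vertex on the opposite side from its own shadow, so
  that the edges x x' give three of the nine paths. A path of G lifts to S(G) by replacing any
  set of pairwise non-consecutive vertices by their shadows. The two complementary alternating
  lifts of A are vertex-disjoint and join a and c across the bipartition in both ways; the same
  holds for B with c and b. R, lifted at most at its first vertex, and D, lifted at its last and
  possibly its first vertex, give the remaining two paths, and lifts of different paths of G meet
  only in branch vertices.\<close>

lemma path_in_rev:
  assumes sym: "\<And>x y. E x y \<Longrightarrow> E y x" and p: "path_in V E p"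
  shows "path_in V E (rev p)"
  unfolding path_in_def
proof (intro conjI allI impI)
  show "rev p \<noteq> []" "distinct (rev p)" "set (rev p) \<subseteq> V"
    using p by (auto simp: path_in_def)
  fix i assume i: "Suc i < length (rev p)"
  define j where "j = length p - Suc (Suc i)"
  have "E (p ! j) (p ! Suc j)" using p i by (auto simp: path_in_def j_def)
  moreover have "rev p ! i = p ! Suc j" "rev p ! Suc i = p ! j"
    using i by (auto simp: rev_nth j_def Suc_diff_Suc)
  ultimately show "E (rev p ! i) (rev p ! Suc i)" using sym by simp
qed

lemma
  assumes "p \<noteq> []" "q \<noteq> []" "last p = hd q"
  shows hd_append_tl: "hd (p @ tl q) = hd p"
    and last_append_tl: "last (p @ tl q) = last q"
    and set_append_tl: "set (p @ tl q) = set p \<union> set q"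
proof -
  obtain x q' where q: "q = x # q'" using assms(2) by (cases q) auto
  have "x \<in> set p" using assms(1,3) q last_in_set by fastforce
  then show "hd (p @ tl q) = hd p" "last (p @ tl q) = last q" "set (p @ tl q) = set p \<union> set q"
    using assms q by auto
qed

lemma path_in_append_tl:
  assumes p: "path_in V E p" and q: "path_in V E q" and joint: "last p = hd q"
    and meet: "set p \<inter> set q \<subseteq> {hd q}"
  shows "path_in V E (p @ tl q)"
proof -
  obtain x q' where q_eq: "q = x # q'" using q by (cases q) (auto simp: path_in_def)
  have "p \<noteq> []" using p by (simp add: path_in_def)
  have edge: "E ((p @ q') ! i) ((p @ q') ! Suc i)" if i: "Suc i < length (p @ q')" for i
  proof -
    consider "Suc i < length p" | "Suc i = length p" | "Suc i > length p" by linarith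
    then show ?thesis
    proof cases
      case 1
      then show ?thesis using p by (simp add: path_in_def nth_append)
    next
      case 2
      have "p ! i = x"
        using 2 joint q_eq \<open>p \<noteq> []\<close> by (metis diff_Suc_1 last_conv_nth list.sel(1))
      moreover have "E ((x # q') ! 0) ((x # q') ! Suc 0)"
        using q q_eq i 2 by (auto simp: path_in_def)
      ultimately show ?thesis using 2 by (simp add: nth_append)
    next
      case 3
      define j where "j = i - length p"
      have "i = length p + j" using 3 j_def by simp
      moreover have "E ((x # q') ! Suc j) ((x # q') ! Suc (Suc j))"
        using q q_eq i \<open>i = length p + j\<close> by (auto simp: path_in_def)
      ultimately show ?thesis by (simp add: nth_append)
    qed
  qed
  have "distinct (p @ q')" using p q meet q_eq by (auto simp: path_in_def)
  moreover have "set (p @ q') \<subseteq> V" using p q q_eq by (auto simp: path_in_def)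
  ultimately show ?thesis
    using edge q_eq \<open>p \<noteq> []\<close> unfolding path_in_def by simp
qed

lemma path_in_join:
  assumes "path_in V E p" "path_in V E q" "last p = hd q" "set p \<inter> set q \<subseteq> {hd q}"
  shows "path_in V E (p @ tl q)" "hd (p @ tl q) = hd p" "last (p @ tl q) = last q"
    "set (p @ tl q) = set p \<union> set q"
proof -
  have "p \<noteq> []" "q \<noteq> []" using assms(1,2) by (simp_all add: path_in_def)
  then show "path_in V E (p @ tl q)" "hd (p @ tl q) = hd p" "last (p @ tl q) = last q"
    "set (p @ tl q) = set p \<union> set q"
    using path_in_append_tl[OF assms] hd_append_tl last_append_tl set_append_tl assms(3) by simp_all
qed

lemma three_le_length:
  assumes "distinct p" "{x, y, z} \<subseteq> set p" "distinct [x, y, z]"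
  shows "3 \<le> length p"
proof -
  have "card {x, y, z} \<le> card (set p)" using assms(2) by (simp add: card_mono)
  then show ?thesis using assms(1,3) by (simp add: distinct_card)
qed

definition joining_path ::
  "'a set \<Rightarrow> ('a \<Rightarrow> 'a \<Rightarrow> bool) \<Rightarrow> 'a set \<Rightarrow> 'a list \<Rightarrow> 'a \<Rightarrow> 'a \<Rightarrow> bool" where
  "joining_path V E W p x y \<longleftrightarrow> path_in V E p \<and> {hd p, last p} = {x, y} \<and> set p \<inter> W = {x, y}"

lemma joining_path_commute: "joining_path V E W p x y \<longleftrightarrow> joining_path V E W p y x"
  by (auto simp: joining_path_def insert_commute)

definition orient :: "'a \<Rightarrow> 'a list \<Rightarrow> 'a list" where
  "orient x p = (if hd p = x then p else rev p)"

lemma orient: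
  assumes "p \<noteq> []" "{hd p, last p} = {x, y}" "x \<noteq> y"
  shows "hd (orient x p) = x" "last (orient x p) = y" "orient y p = rev (orient x p)"
    "set (orient x p) = set p"
  using assms by (auto simp: orient_def hd_rev last_rev doubleton_eq_iff)

lemma path_in_orient:
  "(\<And>x y. E x y \<Longrightarrow> E y x) \<Longrightarrow> path_in V E p \<Longrightarrow> path_in V E (orient x p)"
  by (simp add: orient_def path_in_rev)

lemma has_subdivisionI:
  fixes EH :: "'b::linorder \<Rightarrow> 'b \<Rightarrow> bool" and Q :: "'b \<Rightarrow> 'b \<Rightarrow> 'a list"
  assumes H: "simple_graph VH EH" and EG_sym: "\<And>x y. EG x y \<Longrightarrow> EG y x"
    and f: "inj_on f VH" "f ` VH \<subseteq> VG"
    and paths: "\<And>u v. EH u v \<Longrightarrow> u < v \<Longrightarrow> joining_path VG EG (f ` VH) (Q u v) (f u) (f v)"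
    and disjoint: "\<And>u v x y. EH u v \<Longrightarrow> u < v \<Longrightarrow> EH x y \<Longrightarrow> x < y \<Longrightarrow> (u, v) \<noteq> (x, y)
      \<Longrightarrow> set (Q u v) \<inter> set (Q x y) \<subseteq> f ` VH"
  shows "has_subdivision VH EH VG EG"
proof -
  define P where "P u v = orient (f u) (Q (min u v) (max u v))" for u v
  have oriented: "EH (min u v) (max u v) \<and> min u v < max u v" if "EH u v" for u v
  proof -
    have "u \<noteq> v" "EH v u" using H that by (auto simp: simple_graph_def)
    then show ?thesis using that by (auto simp: min_def max_def)
  qed
  have "path_in VG EG (P u v) \<and> hd (P u v) = f u \<and> last (P u v) = f v \<and> P v u = rev (P u v)
    \<and> set (P u v) \<inter> f ` VH = {f u, f v}" if uv: "EH u v" for u v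
  proof -
    define q where "q = Q (min u v) (max u v)"
    have "u \<in> VH" "v \<in> VH" "u \<noteq> v" using H uv by (auto simp: simple_graph_def)
    then have "f u \<noteq> f v" using f(1) by (auto dest: inj_onD)
    have "{f (min u v), f (max u v)} = {f u, f v}" by (auto simp: min_def max_def)
    then have q: "path_in VG EG q" "{hd q, last q} = {f u, f v}" "set q \<inter> f ` VH = {f u, f v}"
      using paths oriented[OF uv] q_def unfolding joining_path_def by auto
    have "q \<noteq> []" using q(1) by (simp add: path_in_def)
    moreover have "P u v = orient (f u) q" "P v u = orient (f v) q"
      by (simp_all add: P_def q_def min.commute max.commute)
    ultimately show ?thesis
      using q orient[of q "f u" "f v"] path_in_orient[OF EG_sym q(1)] \<open>f u \<noteq> f v\<close> by simp
  qed
  moreover have "set (P u v) \<inter> set (P x y) \<subseteq> f ` VH"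
    if "EH u v" "EH x y" "{u, v} \<noteq> {x, y}" for u v x y
  proof -
    have "(min u v, max u v) \<noteq> (min x y, max x y)"
      using that(3) by (auto simp: min_def max_def split: if_splits)
    then show ?thesis
      using disjoint[of "min u v" "max u v" "min x y" "max x y"] oriented that(1,2)
      by (auto simp: P_def orient_def)
  qed
  ultimately show ?thesis
    unfolding has_subdivision_def using f by blast
qed

definition lift :: "(nat \<Rightarrow> bool) \<Rightarrow> 'a list \<Rightarrow> ('a \<times> bool) list" where
  "lift g p = map (\<lambda>i. (p ! i, g i)) [0..<length p]"

lemma length_lift [simp]: "length (lift g p) = length p"
  by (simp add: lift_def)

lemma nth_lift [simp]: "i < length p \<Longrightarrow> lift g p ! i = (p ! i, g i)"
  by (simp add: lift_def)

lemma map_fst_lift [simp]: "map fst (lift g p) = p"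
  by (rule nth_equalityI) auto

lemma lift_eq_Nil_iff [simp]: "lift g p = [] \<longleftrightarrow> p = []"
  by (simp add: lift_def)

lemma distinct_lift: "distinct p \<Longrightarrow> distinct (lift g p)"
  by (metis distinct_map map_fst_lift)

lemma hd_lift: "p \<noteq> [] \<Longrightarrow> hd (lift g p) = (hd p, g 0)"
  by (simp add: hd_conv_nth)

lemma last_lift: "p \<noteq> [] \<Longrightarrow> last (lift g p) = (last p, g (length p - 1))"
  by (simp add: last_conv_nth)

lemma set_lift: "set (lift g p) = {(p ! i, g i) | i. i < length p}"
  by (auto simp: lift_def)

lemma set_lift_subset: "set (lift g p) \<subseteq> set p \<times> UNIV"
  by (auto simp: set_lift)

lemma lift_Int_subset:
  "set p \<inter> set q \<subseteq> W \<Longrightarrow> set (lift g p) \<inter> set (lift h q) \<subseteq> W \<times> UNIV"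
  using set_lift_subset[of g p] set_lift_subset[of h q] by blast

lemma lift_complement_disjoint:
  assumes "distinct p" "\<And>i. h i \<longleftrightarrow> \<not> g i"
  shows "set (lift g p) \<inter> set (lift h p) = {}"
proof -
  have False if "i < length p" "j < length p" "p ! i = p ! j" "g i = h j" for i j
  proof -
    have "i = j" using that assms(1) nth_eq_iff_index_eq by blast
    then show False using that(4) assms(2) by simp
  qed
  then show ?thesis by (auto simp: set_lift)
qed

lemma set_lift_Int_ends:
  assumes "distinct p" "p \<noteq> []" "set p \<inter> W = {hd p, last p}"
  shows "set (lift g p) \<inter> (W \<times> UNIV) = {hd (lift g p), last (lift g p)}"
proof
  show "{hd (lift g p), last (lift g p)} \<subseteq> set (lift g p) \<inter> (W \<times> UNIV)"
    using assms hd_in_set[of "lift g p"] last_in_set[of "lift g p"]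
    by (auto simp: hd_lift last_lift)
  show "set (lift g p) \<inter> (W \<times> UNIV) \<subseteq> {hd (lift g p), last (lift g p)}"
  proof
    fix x assume x: "x \<in> set (lift g p) \<inter> (W \<times> UNIV)"
    then obtain i where i: "i < length p" "x = (p ! i, g i)" by (auto simp: set_lift)
    have "p ! i \<in> {hd p, last p}" using assms(3) x i nth_mem by blast
    then have "p ! i = p ! 0 \<or> p ! i = p ! (length p - 1)"
      using assms(2) by (simp add: hd_conv_nth last_conv_nth)
    then have "i = 0 \<or> i = length p - 1"
      using assms(1,2) i(1) by (auto simp: nth_eq_iff_index_eq)
    then show "x \<in> {hd (lift g p), last (lift g p)}"
      using i assms(2) by (auto simp: hd_conv_nth last_conv_nth)
  qed
qed

lemma shadow_E_sym:
  assumes "simple_graph V E" "shadow_E V E x y"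
  shows "shadow_E V E y x"
  using assms unfolding simple_graph_def shadow_E_def by (cases "snd x"; cases "snd y") auto

lemma path_in_shadow_lift:
  assumes G: "simple_graph V E" and p: "path_in V E p"
    and g: "\<And>i. Suc i < length p \<Longrightarrow> \<not> (g i \<and> g (Suc i))"
  shows "path_in (shadow_V V) (shadow_E V E) (lift g p)"
  unfolding path_in_def
proof (intro conjI allI impI)
  show "lift g p \<noteq> []" "distinct (lift g p)" "set (lift g p) \<subseteq> shadow_V V"
    using p set_lift_subset[of g p] distinct_lift[of p g]
    by (auto simp: path_in_def shadow_V_def)
  fix i assume i: "Suc i < length (lift g p)"
  have "E (p ! i) (p ! Suc i)" "E (p ! Suc i) (p ! i)" "p ! i \<in> V"
    using p i G by (auto simp: path_in_def simple_graph_def)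
  then show "shadow_E V E (lift g p ! i) (lift g p ! Suc i)"
    using i g[of i] by (auto simp: shadow_E_def)
qed

lemma joining_path_shadow_lift:
  assumes "simple_graph V E" "path_in V E p" "set p \<inter> W = {hd p, last p}"
    and "\<And>i. Suc i < length p \<Longrightarrow> \<not> (g i \<and> g (Suc i))"
  shows "joining_path (shadow_V V) (shadow_E V E) (W \<times> UNIV) (lift g p)
    (hd p, g 0) (last p, g (length p - 1))"
proof -
  have "p \<noteq> []" "distinct p" using assms(2) by (auto simp: path_in_def)
  then show ?thesis
    using path_in_shadow_lift[of V E p g] set_lift_Int_ends[OF _ _ assms(3)] assms(1,2,4)
    unfolding joining_path_def by (simp add: hd_lift last_lift)
qed

lemma joining_path_shadow_stub:
  "x \<in> W \<Longrightarrow> W \<subseteq> V \<Longrightarrow>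
    joining_path (shadow_V V) (shadow_E V E) (W \<times> UNIV) [(x, s), (x, \<not> s)] (x, s) (x, \<not> s)"
  unfolding joining_path_def path_in_def
  by (auto simp: shadow_V_def shadow_E_def less_Suc_eq)

definition alternating :: "bool \<Rightarrow> nat \<Rightarrow> bool" where
  "alternating s i \<longleftrightarrow> (even i \<longleftrightarrow> s)"

lemma alternating_0 [simp]: "alternating s 0 = s"
  and alternating_Not [simp]: "alternating (\<not> s) i \<longleftrightarrow> \<not> alternating s i"
  and alternating_Suc: "\<not> (alternating s i \<and> alternating s (Suc i))"
  by (auto simp: alternating_def)

locale diamond_paths =
  fixes V :: "'a set" and E :: "'a \<Rightarrow> 'a \<Rightarrow> bool" and a b c :: 'a and A B R D :: "'a list"
  assumes graph: "simple_graph V E"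
    and distinct_abc: "distinct [a, b, c]"
    and paths: "path_in V E A" "path_in V E B" "path_in V E R" "path_in V E D"
    and ends: "hd A = a" "last A = c" "hd B = c" "last B = b" "hd R = a" "last R = b"
      "hd D = a" "last D = b"
    and meets: "set A \<inter> {a, b, c} = {a, c}" "set B \<inter> {a, b, c} = {c, b}"
      "set R \<inter> {a, b, c} = {a, b}" "set D \<inter> {a, b, c} = {a, b}"
    and internally_disjoint: "set A \<inter> set B \<subseteq> {a, b, c}" "set A \<inter> set R \<subseteq> {a, b, c}"
      "set A \<inter> set D \<subseteq> {a, b, c}" "set B \<inter> set R \<subseteq> {a, b, c}"
      "set B \<inter> set D \<subseteq> {a, b, c}" "set R \<inter> set D \<subseteq> {a, b, c}"
    and D_long: "3 \<le> length D"
begin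

abbreviation shadow_joining :: "('a \<times> bool) list \<Rightarrow> 'a \<times> bool \<Rightarrow> 'a \<times> bool \<Rightarrow> bool" where
  "shadow_joining \<equiv> joining_path (shadow_V V) (shadow_E V E) ({a, b, c} \<times> UNIV)"

text \<open>The flags are fixed by the parities of A and B so that every alternating lift of A
  or B ends on the other side of K33 than it starts (end_flags).\<close>

definition flag_c :: bool where "flag_c \<longleftrightarrow> even (length B - 1)"
definition flag_a :: bool where "flag_a \<longleftrightarrow> (even (length A - 1) \<noteq> flag_c)"

definition branch :: "nat \<Rightarrow> 'a \<times> bool" where
  "branch k = [(a, flag_a), (b, False), (c, flag_c), (a, \<not> flag_a), (b, True), (c, \<not> flag_c)] ! k"

definition K33_path :: "nat \<Rightarrow> nat \<Rightarrow> ('a \<times> bool) list" where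
  "K33_path u v =
    (if v = u + 3 then [branch u, branch v]
     else if (u, v) = (0, 5) then lift (alternating flag_a) A
     else if (u, v) = (2, 3) then lift (alternating (\<not> flag_a)) A
     else if (u, v) = (2, 4) then lift (alternating flag_c) B
     else if (u, v) = (1, 5) then lift (alternating (\<not> flag_c)) B
     else if (u, v) = (1, 3) then lift (\<lambda>i. i = 0 \<and> \<not> flag_a) R
     else lift (\<lambda>i. i = 0 \<and> flag_a \<or> i = length D - 1) D)"

lemma K33_V_eq: "K33_V = {0, 1, 2, 3, 4, 5}"
  by (auto simp: K33_V_def)

lemma branch_image: "branch ` K33_V = {a, b, c} \<times> UNIV"
proof -
  have "branch ` K33_V
      = {(a, flag_a), (b, False), (c, flag_c), (a, \<not> flag_a), (b, True), (c, \<not> flag_c)}"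
    by (simp add: K33_V_eq branch_def)
  also have "\<dots> = {a, b, c} \<times> UNIV"
    by (cases flag_a; cases flag_c) (auto simp: UNIV_bool)
  finally show ?thesis .
qed

lemma inj_branch: "inj_on branch K33_V"
  using distinct_abc by (auto simp: inj_on_def K33_V_eq branch_def)

lemma branch_vertices_in_V: "{a, b, c} \<subseteq> V"
proof -
  have "set A \<subseteq> V" "set B \<subseteq> V" using paths(1,2) by (simp_all add: path_in_def)
  moreover have "a \<in> set A" "c \<in> set A" "b \<in> set B" using meets(1,2) by blast+
  ultimately show ?thesis by blast
qed

lemma meets_ends: "set A \<inter> {a, b, c} = {hd A, last A}" "set B \<inter> {a, b, c} = {hd B, last B}"
  "set R \<inter> {a, b, c} = {hd R, last R}" "set D \<inter> {a, b, c} = {hd D, last D}"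
  using meets by (simp_all only: ends)

lemma R_long: "length R - 1 \<noteq> 0"
proof
  assume "length R - 1 = 0"
  moreover have "R \<noteq> []" using paths(3) by (simp add: path_in_def)
  ultimately have "hd R = last R" by (simp add: hd_conv_nth last_conv_nth)
  then show False using ends(5,6) distinct_abc by simp
qed

lemma end_flags: "alternating flag_a (length A - 1) \<longleftrightarrow> \<not> flag_c"
  "alternating flag_c (length B - 1)"
  by (auto simp: alternating_def flag_a_def flag_c_def)

lemma shadow_joining_lift_A:
  "shadow_joining (lift (alternating s) A) (a, s) (c, alternating s (length A - 1))"
  using joining_path_shadow_lift[OF graph paths(1) meets_ends(1), of "alternating s"]
    alternating_Suc
  by (simp add: ends)

lemma shadow_joining_lift_B:
  "shadow_joining (lift (alternating s) B) (c, s) (b, alternating s (length B - 1))"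
  using joining_path_shadow_lift[OF graph paths(2) meets_ends(2), of "alternating s"]
    alternating_Suc
  by (simp add: ends)

lemma shadow_joining_lift_R: "shadow_joining (lift (\<lambda>i. i = 0 \<and> s) R) (a, s) (b, False)"
  using joining_path_shadow_lift[OF graph paths(3) meets_ends(3), of "\<lambda>i. i = 0 \<and> s"] R_long
  by (simp add: ends)

lemma shadow_joining_lift_D:
  "shadow_joining (lift (\<lambda>i. i = 0 \<and> s \<or> i = length D - 1) D) (a, s) (b, True)"
proof -
  have "\<not> ((i = 0 \<and> s \<or> i = length D - 1) \<and> (Suc i = 0 \<and> s \<or> Suc i = length D - 1))"
    if "Suc i < length D" for i
    using that D_long by auto
  then show ?thesis
    using joining_path_shadow_lift[OF graph paths(4) meets_ends(4),
        of "\<lambda>i. i = 0 \<and> s \<or> i = length D - 1"] D_long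
    by (simp add: ends)
qed

lemma shadow_joining_K33_path:
  assumes "u < 3" "3 \<le> v" "v < 6"
  shows "shadow_joining (K33_path u v) (branch u) (branch v)"
proof -
  note flags = end_flags[simplified]
  consider "v = u + 3" | "(u, v) = (0, 5)" | "(u, v) = (2, 3)" | "(u, v) = (2, 4)"
    | "(u, v) = (1, 5)" | "(u, v) = (1, 3)" | "(u, v) = (0, 4)"
    using assms by fastforce
  then show ?thesis
  proof cases
    case 1
    have "u = 0 \<or> u = 1 \<or> u = 2" using assms(1) by auto
    then show ?thesis
      using 1 joining_path_shadow_stub[OF _ branch_vertices_in_V, of _ E]
        joining_path_shadow_stub[OF _ branch_vertices_in_V, of b E False]
      by (auto simp: K33_path_def branch_def)
  next
    case 2
    then show ?thesis using shadow_joining_lift_A[of flag_a]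
      by (simp add: K33_path_def branch_def flags)
  next
    case 3
    then show ?thesis using shadow_joining_lift_A[of "\<not> flag_a"]
      by (simp add: K33_path_def branch_def flags joining_path_commute)
  next
    case 4
    then show ?thesis using shadow_joining_lift_B[of flag_c]
      by (simp add: K33_path_def branch_def flags)
  next
    case 5
    then show ?thesis using shadow_joining_lift_B[of "\<not> flag_c"]
      by (simp add: K33_path_def branch_def flags joining_path_commute)
  next
    case 6
    then show ?thesis using shadow_joining_lift_R[of "\<not> flag_a"]
      by (simp add: K33_path_def branch_def joining_path_commute)
  next
    case 7
    then show ?thesis using shadow_joining_lift_D[of flag_a]
      by (simp add: K33_path_def branch_def)
  qed
qed

lemma K33_paths_disjoint:
  assumes "u < 3" "3 \<le> v" "v < 6" "x < 3" "3 \<le> y" "y < 6" "(u, v) \<noteq> (x, y)"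
  shows "set (K33_path u v) \<inter> set (K33_path x y) \<subseteq> {a, b, c} \<times> UNIV"
proof -
  have stub: "set (K33_path k (k + 3)) \<subseteq> {a, b, c} \<times> UNIV" if "k < 3" for k
  proof -
    have "set (K33_path k (k + 3)) \<subseteq> branch ` K33_V"
      using that by (auto simp: K33_path_def K33_V_def)
    then show ?thesis by (simp only: branch_image)
  qed
  consider "v = u + 3" | "y = x + 3" | "v \<noteq> u + 3" "y \<noteq> x + 3" by blast
  then show ?thesis
  proof cases
    case 1
    then show ?thesis using stub[OF assms(1)] by blast
  next
    case 2
    then show ?thesis using stub[OF assms(4)] by blast
  next
    case 3
    have "distinct A" "distinct B" using paths(1,2) by (simp_all add: path_in_def)
    then have complementary:
      "set (lift (alternating s) A) \<inter> set (lift (alternating (\<not> s)) A) = {}"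
      "set (lift (alternating (\<not> s)) A) \<inter> set (lift (alternating s) A) = {}"
      "set (lift (alternating s) B) \<inter> set (lift (alternating (\<not> s)) B) = {}"
      "set (lift (alternating (\<not> s)) B) \<inter> set (lift (alternating s) B) = {}" for s
      by (simp_all add: lift_complement_disjoint)
    have internally_disjoint':
      "set B \<inter> set A \<subseteq> {a, b, c}" "set R \<inter> set A \<subseteq> {a, b, c}" "set D \<inter> set A \<subseteq> {a, b, c}"
      "set R \<inter> set B \<subseteq> {a, b, c}" "set D \<inter> set B \<subseteq> {a, b, c}" "set D \<inter> set R \<subseteq> {a, b, c}"
      using internally_disjoint by blast+
    have "u \<in> {0, 1, 2}" "v \<in> {3, 4, 5}" "x \<in> {0, 1, 2}" "y \<in> {3, 4, 5}"
      using assms(1-6) by auto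
    then show ?thesis
      using 3 assms(7)
      by (elim insertE emptyE; simp add: K33_path_def complementary internally_disjoint
          internally_disjoint' lift_Int_subset)
  qed
qed

theorem shadow_has_K33_subdivision: "has_subdivision K33_V K33_E (shadow_V V) (shadow_E V E)"
proof (rule has_subdivisionI[where f = branch and Q = K33_path])
  show "simple_graph K33_V K33_E" by (auto simp: simple_graph_def K33_V_def K33_E_def)
  show "shadow_E V E y x" if "shadow_E V E x y" for x y using shadow_E_sym[OF graph that] .
  show "inj_on branch K33_V" by (rule inj_branch)
  show "branch ` K33_V \<subseteq> shadow_V V"
    using branch_vertices_in_V by (auto simp: branch_image shadow_V_def)
  have K33_edge: "u < 3 \<and> 3 \<le> v \<and> v < 6" if "K33_E u v" "u < v" for u v
    using that by (auto simp: K33_E_def)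
  show "joining_path (shadow_V V) (shadow_E V E) (branch ` K33_V) (K33_path u v) (branch u) (branch v)"
    if "K33_E u v" "u < v" for u v
    using shadow_joining_K33_path K33_edge[OF that] unfolding branch_image by blast
  show "set (K33_path u v) \<inter> set (K33_path x y) \<subseteq> branch ` K33_V"
    if "K33_E u v" "u < v" "K33_E x y" "x < y" "(u, v) \<noteq> (x, y)" for u v x y
    using K33_paths_disjoint K33_edge that unfolding branch_image by blast
qed

end

lemma K4m_subdivisionE:
  assumes "has_subdivision K4m_V K4m_E V E"
  obtains f P where "distinct [f 0, f 1, f 2, f 3]"
    and "\<And>u v. K4m_E u v \<Longrightarrow> path_in V E (P u v)"
    and "\<And>u v. K4m_E u v \<Longrightarrow> hd (P u v) = f u" "\<And>u v. K4m_E u v \<Longrightarrow> last (P u v) = f v"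
    and "\<And>u v. K4m_E u v \<Longrightarrow> set (P u v) \<inter> {f 0, f 1, f 2, f 3} = {f u, f v}"
    and "\<And>u v x y. K4m_E u v \<Longrightarrow> K4m_E x y \<Longrightarrow> {u, v} \<noteq> {x, y}
      \<Longrightarrow> set (P u v) \<inter> set (P x y) \<subseteq> {f u, f v} \<inter> {f x, f y}"
proof -
  obtain f P where inj: "inj_on f K4m_V"
    and edge: "\<forall>u v. K4m_E u v \<longrightarrow> path_in V E (P u v) \<and> hd (P u v) = f u \<and> last (P u v) = f v
      \<and> P v u = rev (P u v) \<and> set (P u v) \<inter> f ` K4m_V = {f u, f v}"
    and disjoint: "\<forall>u v x y. K4m_E u v \<and> K4m_E x y \<and> {u, v} \<noteq> {x, y}
      \<longrightarrow> set (P u v) \<inter> set (P x y) \<subseteq> f ` K4m_V"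
    using assms unfolding has_subdivision_def by blast
  have K4m_V_eq: "K4m_V = {0, 1, 2, 3}" by (auto simp: K4m_V_def)
  have "f i \<noteq> f j" if "i \<in> K4m_V" "j \<in> K4m_V" "i \<noteq> j" for i j
    using inj that by (auto dest: inj_onD)
  then have "distinct [f 0, f 1, f 2, f 3]" by (simp add: K4m_V_eq)
  moreover have "set (P u v) \<inter> set (P x y) \<subseteq> {f u, f v} \<inter> {f x, f y}"
    if "K4m_E u v" "K4m_E x y" "{u, v} \<noteq> {x, y}" for u v x y
  proof -
    have "set (P u v) \<inter> f ` K4m_V = {f u, f v}" "set (P x y) \<inter> f ` K4m_V = {f x, f y}"
      using edge that(1,2) by simp_all
    moreover have "set (P u v) \<inter> set (P x y) \<subseteq> f ` K4m_V" using disjoint that by simp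
    ultimately show ?thesis by blast
  qed
  moreover have "f ` K4m_V = {f 0, f 1, f 2, f 3}" by (simp add: K4m_V_eq)
  ultimately show ?thesis
    using edge by (intro that[of f P]) simp_all
qed

lemma diamond_paths_of_K4m_subdivision:
  assumes G: "simple_graph V E" and H: "has_subdivision K4m_V K4m_E V E"
  obtains a b c A B R D where "diamond_paths V E a b c A B R D"
proof -
  obtain f P where distinct: "distinct [f 0, f 1, f 2, f 3]"
    and path: "\<And>u v. K4m_E u v \<Longrightarrow> path_in V E (P u v)"
    and hd: "\<And>u v. K4m_E u v \<Longrightarrow> hd (P u v) = f u"
    and last: "\<And>u v. K4m_E u v \<Longrightarrow> last (P u v) = f v"
    and meets4: "\<And>u v. K4m_E u v \<Longrightarrow> set (P u v) \<inter> {f 0, f 1, f 2, f 3} = {f u, f v}"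
    and shared: "\<And>u v x y. K4m_E u v \<Longrightarrow> K4m_E x y \<Longrightarrow> {u, v} \<noteq> {x, y}
      \<Longrightarrow> set (P u v) \<inter> set (P x y) \<subseteq> {f u, f v} \<inter> {f x, f y}"
    using K4m_subdivisionE[OF H] by blast
  let ?W = "{f 0, f 1, f 2}"
  have edges: "K4m_E 0 2" "K4m_E 2 1" "K4m_E 0 1" "K4m_E 0 3" "K4m_E 3 1"
    by (simp_all add: K4m_E_def K4m_V_def doubleton_eq_iff)
  define D where "D = P 0 3 @ tl (P 3 1)"
  have joint: "last (P 0 3) = hd (P 3 1)" using last[OF edges(4)] hd[OF edges(5)] by simp
  have "set (P 0 3) \<inter> set (P 3 1) \<subseteq> {hd (P 3 1)}"
    using shared[OF edges(4,5)] hd[OF edges(5)] distinct by (auto simp: doubleton_eq_iff)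
  then have D: "path_in V E D" "hd D = f 0" "last D = f 1" "set D = set (P 0 3) \<union> set (P 3 1)"
    using path_in_join[OF path[OF edges(4)] path[OF edges(5)] joint] hd[OF edges(4)] last[OF edges(5)]
    by (simp_all add: D_def)
  have "{f 0, f 3, f 1} \<subseteq> set D" using D(4) meets4[OF edges(4)] meets4[OF edges(5)] by blast
  then have D_long: "3 \<le> length D"
    using three_le_length[of D "f 0" "f 3" "f 1"] D(1) distinct by (auto simp: path_in_def)
  have restrict: "X \<inter> ?W = Z \<inter> ?W" if "X \<inter> {f 0, f 1, f 2, f 3} = Z" for X Z
    using that by blast
  have meets: "set (P 0 2) \<inter> ?W = {f 0, f 2}" "set (P 2 1) \<inter> ?W = {f 2, f 1}"
    "set (P 0 1) \<inter> ?W = {f 0, f 1}" "set D \<inter> ?W = {f 0, f 1}"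
    using restrict[OF meets4[OF edges(1)]] restrict[OF meets4[OF edges(2)]]
      restrict[OF meets4[OF edges(3)]] restrict[OF meets4[OF edges(4)]]
      restrict[OF meets4[OF edges(5)]] distinct
    by (auto simp: D(4) Int_Un_distrib2)
  have inside: "set (P u v) \<inter> set (P x y) \<subseteq> ?W"
    if "K4m_E u v" "K4m_E x y" "{u, v} \<noteq> {x, y}" "{u, v} \<subseteq> {0, 1, 2}" for u v x y
    using shared[OF that(1-3)] that(4) by auto
  have internally_disjoint:
    "set (P 0 2) \<inter> set (P 2 1) \<subseteq> ?W" "set (P 0 2) \<inter> set (P 0 1) \<subseteq> ?W"
    "set (P 0 2) \<inter> set D \<subseteq> ?W" "set (P 2 1) \<inter> set (P 0 1) \<subseteq> ?W"
    "set (P 2 1) \<inter> set D \<subseteq> ?W" "set (P 0 1) \<inter> set D \<subseteq> ?W"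
    unfolding D(4) Int_Un_distrib Un_subset_iff
    by (intro conjI inside; (fact edges | simp add: doubleton_eq_iff))+
  have "distinct [f 0, f 1, f 2]" using distinct by simp
  note facts = G this D D_long meets internally_disjoint
    path[OF edges(1)] path[OF edges(2)] path[OF edges(3)] hd[OF edges(1)] hd[OF edges(2)]
    hd[OF edges(3)] last[OF edges(1)] last[OF edges(2)] last[OF edges(3)]
  show ?thesis
    by (rule that[of "f 0" "f 1" "f 2" "P 0 2" "P 2 1" "P 0 1" D], unfold_locales) (fact facts)+
qed

theorem lemma5p5:
  fixes V :: "'a set" and E :: "'a \<Rightarrow> 'a \<Rightarrow> bool"
  assumes "simple_graph V E"
    and "has_subdivision K4m_V K4m_E V E"
  shows "has_subdivision K33_V K33_E (shadow_V V) (shadow_E V E)"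
proof -
  obtain a b c A B R D where "diamond_paths V E a b c A B R D"
    using diamond_paths_of_K4m_subdivision[OF assms] .
  then show ?thesis by (rule diamond_paths.shadow_has_K33_subdivision)
qed

end
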